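(* Let $\pi$ be the policy induced by Dual Gradient Descent with Proxy Assignments (any stepsize and initial prices). For every sample path $\omega$, $$V^\pi[\omega]=\sum_{k\in[K]}\widetilde V^\pi_k\Big[\omega_k\,\Big|\,Z^\pi\big(\tfrac{(k-1)T}K\big)\Big]-\sum_{k\in[K]}\sum_{j\in[n]}\sum_{i\in[m]}c_{ji}\widetilde Z^\pi_{ji,k}\big(\tfrac{kT}K:T\big)-\sum_{k\in[K]}\frac TK\sum_{k'>k}\sum_{i\in[m]}k'g_{k'i}\Bigg(\frac{Z^\pi_i(kT/K)+\widetilde Z^\pi_{i,k}\big(\frac{kT}K:\frac{k'T}K\big)}{k'T/K}\Bigg).$$
   Context: Model. There are $m$ resources and $n$ arrival types; type $j$ has cost vector $c_j\in\mathbb R^m$ and allowed resources $\mathcal S_j\subseteq[m]$. The horizon has $T$ periods partitioned into $K$ epochs ($T$ a multiple of $K$), epoch $k$ being $\mathcal T_k=\{(k-1)T/K+1,\dots,kT/K\}$. In period $t$ one arrival of type $j^t$ occurs; $\omega=(j^1,\dots,j^T)$, $\omega_k=(j^t)_{t\in\mathcal T_k}$. Feasible decisions in period $t$: $\mathcal X^t=\{x\in\{0,1\}^m:\sum_ix_i\le1,\ x_i=0\ \forall i\notin\mathcal S_{j^t}\}$. $Z^\pi_{ji}(t)$ is the number of type-$j$ arrivals assigned to resource $i$ in periods $1..t$, $Z^\pi_i=\sum_jZ^\pi_{ji}$, $Z(t_1:t_2)=Z(t_2)-Z(t_1)$. Each epoch $k$ and resource $i$ has a target $\rho_{ki}\in[0,1]$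 and a convex $L$-Lipschitz $g_{ki}:[0,1]\to\mathbb R_{\ge0}$ with $g_{ki}(\rho_{ki})=0$. The cost is $V^\pi[\omega]=\sum_{j,i}c_{ji}Z^\pi_{ji}(T)+\frac TK\sum_k\sum_ik\,g_{ki}\big(Z^\pi_i(kT/K)/(kT/K)\big)$. Dual Gradient Descent with Proxy Assignments (stepsize $\eta$, initial $\mu^1\in\mathbb R^{K\times m}$): for $t=1,\dots,T$, with $k$ the epoch of $t$: if $t=(k-1)T/K+1$ set $\mu^t_{k'}=\mu^1_{k'}$ for $k'\ge k$; observe $j=j^t$; for every $k'\ge k$ compute the proxy assignment $\tilde x^t_{k'}\in\arg\min_{x\in\mathcal X^t}\sum_ix_i(c_{ji}-\mu^t_{k'i})$; implement $x^t=\tilde x^t_k$; compute $a^t\in\arg\min_{a\in[0,1]^{(K+1-k)\times m}}\sum_{k'\ge k}k'\sum_ig_{k'i}\big(\frac{\sum_{t'\le(k-1)T/K}x^{t'}_i}{k'T/K}+\sum_{k''=k}^{k'}\frac{a_{k''i}}{k'}\big)+\sum_{k'\ge k}\sum_i\mu^t_{k'i}a_{k'i}$; update $\mu^{t+1}_{k'}=\mu^t_{k'}+\eta(a^t_{k'}-\tilde x^t_{k'})$ for $k'\ge k$. Proxy quantities. For $k\le k_1\le k_2\le K$, let $\widetilde Z^\pi_{ji,k}\big(\frac{(k_1-1)T}K:\frac{k_2T}K\big)=\sum_{t\in\mathcal T_k}\sum_{k''=k_1}^{k_2}\tilde x^t_{k''i}\mathbf 1\{j^t=j\}$ and $\widetilde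 Z^\pi_{i,k}(\cdot)=\sum_j\widetilde Z^\pi_{ji,k}(\cdot)$ (so $\frac{kT}K:T$ corresponds to $k_1=k+1$, $k_2=K$, and $(k-1)T/K:T$ to $k_1=k,k_2=K$). The cumulative proxy cost in epoch $k$ given $z\in\mathbb N^m$ is $$\widetilde V^\pi_k[\omega_k\mid z]=\sum_{j,i}c_{ji}\widetilde Z^\pi_{ji,k}\big(\tfrac{(k-1)T}K:T\big)+\frac TK\sum_{k'\ge k}\sum_ik'g_{k'i}\Bigg(\frac{z_i+\widetilde Z^\pi_{i,k}\big(\frac{(k-1)T}K:\frac{k'T}K\big)}{k'T/K}\Bigg).$$ *)

theory Defs
  imports "HOL-Analysis.Analysis"
begin

(* Conventions: resources i \<in> {1..m}, types j \<in> {1..n}, periods t \<in> {1..T},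
   epochs k \<in> {1..K}; D = T div K is the epoch length.
   A decision / proxy assignment is a function nat \<Rightarrow> real (0/1 valued, zero outside {1..m}). *)

definition epoch_of :: "nat \<Rightarrow> nat \<Rightarrow> nat \<Rightarrow> nat" where
  "epoch_of T K t = (t - 1) div (T div K) + 1"

definition epoch_periods :: "nat \<Rightarrow> nat \<Rightarrow> nat \<Rightarrow> nat set" where
  "epoch_periods T K k = {(k - 1) * (T div K) + 1 .. k * (T div K)}"

definition feasible_dec :: "nat \<Rightarrow> (nat \<Rightarrow> nat set) \<Rightarrow> nat \<Rightarrow> (nat \<Rightarrow> real) set" where
  "feasible_dec m S j = {x. (\<forall>i. x i \<in> {0, 1}) \<and> (\<forall>i. i \<notin> {1..m} \<longrightarrow> x i = 0)
      \<and> (\<Sum>i=1..m. x i) \<le> 1 \<and> (\<forall>i\<in>{1..m}. i \<notin> S j \<longrightarrow> x i = 0)}"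

definition policy_x :: "nat \<Rightarrow> nat \<Rightarrow> (nat \<Rightarrow> nat \<Rightarrow> nat \<Rightarrow> real) \<Rightarrow> nat \<Rightarrow> nat \<Rightarrow> real" where
  "policy_x T K xt t i = xt t (epoch_of T K t) i"

(* objective of the a^t problem at a period of epoch k; x = implemented decisions,
   mu = current prices (epoch k' \<Rightarrow> resource i \<Rightarrow> real) *)
definition a_obj :: "nat \<Rightarrow> nat \<Rightarrow> nat \<Rightarrow> nat \<Rightarrow> (nat \<Rightarrow> nat \<Rightarrow> real \<Rightarrow> real)
    \<Rightarrow> (nat \<Rightarrow> nat \<Rightarrow> real) \<Rightarrow> (nat \<Rightarrow> nat \<Rightarrow> real) \<Rightarrow> (nat \<Rightarrow> nat \<Rightarrow> real) \<Rightarrow> real" where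
  "a_obj m T K k g x mu a =
     (\<Sum>k'=k..K. real k' * (\<Sum>i=1..m. g k' i
        ((\<Sum>t'=1..(k - 1) * (T div K). x t' i) / real (k' * (T div K))
         + (\<Sum>k''=k..k'. a k'' i / real k'))))
     + (\<Sum>k'=k..K. \<Sum>i=1..m. mu k' i * a k' i)"

(* xt t k' = proxy assignment \<tilde>x^t_{k'}, mu t k' = \<mu>^t_{k'}, a t k' = a^t_{k'}:
   these sequences are a run of Dual Gradient Descent with Proxy Assignments
   (stepsize eta, initial prices mu1), with arbitrary tie-breaking in the argmins. *)
definition dgd_proxy_run :: "nat \<Rightarrow> nat \<Rightarrow> nat \<Rightarrow> (nat \<Rightarrow> nat set) \<Rightarrow> (nat \<Rightarrow> nat \<Rightarrow> real)
    \<Rightarrow> (nat \<Rightarrow> nat \<Rightarrow> real \<Rightarrow> real) \<Rightarrow> (nat \<Rightarrow> nat) \<Rightarrow> real \<Rightarrow> (nat \<Rightarrow> nat \<Rightarrow> real)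
    \<Rightarrow> (nat \<Rightarrow> nat \<Rightarrow> nat \<Rightarrow> real) \<Rightarrow> (nat \<Rightarrow> nat \<Rightarrow> nat \<Rightarrow> real) \<Rightarrow> (nat \<Rightarrow> nat \<Rightarrow> nat \<Rightarrow> real) \<Rightarrow> bool" where
  "dgd_proxy_run m T K S c g omega eta mu1 xt mu a \<longleftrightarrow>
    (\<forall>t\<in>{1..T}. let k = epoch_of T K t; j = omega t in
       (\<forall>k'\<in>{k..K}. \<forall>i\<in>{1..m}.
          mu t k' i = (if t = (k - 1) * (T div K) + 1 then mu1 k' i
                       else mu (t - 1) k' i + eta * (a (t - 1) k' i - xt (t - 1) k' i)))
     \<and> (\<forall>k'\<in>{k..K}. xt t k' \<in> feasible_dec m S j \<and>
          (\<forall>y\<in>feasible_dec m S j.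
             (\<Sum>i=1..m. xt t k' i * (c j i - mu t k' i)) \<le> (\<Sum>i=1..m. y i * (c j i - mu t k' i))))
     \<and> (\<forall>k'\<in>{k..K}. \<forall>i\<in>{1..m}. a t k' i \<in> {0..1})
     \<and> (\<forall>b. (\<forall>k'\<in>{k..K}. \<forall>i\<in>{1..m}. b k' i \<in> {0..1}) \<longrightarrow>
          a_obj m T K k g (policy_x T K xt) (mu t) (a t) \<le> a_obj m T K k g (policy_x T K xt) (mu t) b))"

definition Z_i :: "nat \<Rightarrow> nat \<Rightarrow> (nat \<Rightarrow> nat \<Rightarrow> nat \<Rightarrow> real) \<Rightarrow> nat \<Rightarrow> nat \<Rightarrow> real" where
  "Z_i T K xt t i = (\<Sum>t'=1..t. policy_x T K xt t' i)"

definition Z_ji :: "nat \<Rightarrow> nat \<Rightarrow> (nat \<Rightarrow> nat) \<Rightarrow> (nat \<Rightarrow> nat \<Rightarrow> nat \<Rightarrow> real) \<Rightarrow> nat \<Rightarrow> nat \<Rightarrow> nat \<Rightarrow> real" where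
  "Z_ji T K omega xt t j i = (\<Sum>t'=1..t. if omega t' = j then policy_x T K xt t' i else 0)"

definition cost_V :: "nat \<Rightarrow> nat \<Rightarrow> nat \<Rightarrow> nat \<Rightarrow> (nat \<Rightarrow> nat \<Rightarrow> real) \<Rightarrow> (nat \<Rightarrow> nat \<Rightarrow> real \<Rightarrow> real)
    \<Rightarrow> (nat \<Rightarrow> nat) \<Rightarrow> (nat \<Rightarrow> nat \<Rightarrow> nat \<Rightarrow> real) \<Rightarrow> real" where
  "cost_V m n T K c g omega xt =
     (\<Sum>j=1..n. \<Sum>i=1..m. c j i * Z_ji T K omega xt T j i)
     + real T / real K * (\<Sum>k=1..K. \<Sum>i=1..m. real k *
          g k i (Z_i T K xt (k * (T div K)) i / real (k * (T div K))))"

(* \<tilde>Z_{ji,k}((k1-1)T/K : k2 T/K) *)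
definition Zt_ji :: "nat \<Rightarrow> nat \<Rightarrow> (nat \<Rightarrow> nat) \<Rightarrow> (nat \<Rightarrow> nat \<Rightarrow> nat \<Rightarrow> real)
    \<Rightarrow> nat \<Rightarrow> nat \<Rightarrow> nat \<Rightarrow> nat \<Rightarrow> nat \<Rightarrow> real" where
  "Zt_ji T K omega xt k k1 k2 j i =
     (\<Sum>t\<in>epoch_periods T K k. \<Sum>k''=k1..k2. xt t k'' i * (if omega t = j then 1 else 0))"

(* \<tilde>Z_{i,k}((k1-1)T/K : k2 T/K) *)
definition Zt_i :: "nat \<Rightarrow> nat \<Rightarrow> nat \<Rightarrow> (nat \<Rightarrow> nat) \<Rightarrow> (nat \<Rightarrow> nat \<Rightarrow> nat \<Rightarrow> real)
    \<Rightarrow> nat \<Rightarrow> nat \<Rightarrow> nat \<Rightarrow> nat \<Rightarrow> real" where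
  "Zt_i n T K omega xt k k1 k2 i = (\<Sum>j=1..n. Zt_ji T K omega xt k k1 k2 j i)"

definition Vt_k :: "nat \<Rightarrow> nat \<Rightarrow> nat \<Rightarrow> nat \<Rightarrow> (nat \<Rightarrow> nat \<Rightarrow> real) \<Rightarrow> (nat \<Rightarrow> nat \<Rightarrow> real \<Rightarrow> real)
    \<Rightarrow> (nat \<Rightarrow> nat) \<Rightarrow> (nat \<Rightarrow> nat \<Rightarrow> nat \<Rightarrow> real) \<Rightarrow> nat \<Rightarrow> (nat \<Rightarrow> real) \<Rightarrow> real" where
  "Vt_k m n T K c g omega xt k z =
     (\<Sum>j=1..n. \<Sum>i=1..m. c j i * Zt_ji T K omega xt k k K j i)
     + real T / real K * (\<Sum>k'=k..K. \<Sum>i=1..m. real k' *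
          g k' i ((z i + Zt_i n T K omega xt k k k' i) / real (k' * (T div K))))"

end

(* The decision implemented in epoch k is the proxy assignment for epoch k itself, so the
   realized usage of epoch k is the proxy count on the window k..k:
   Z(kT/K) = Z((k-1)T/K) + tilde Z_k((k-1)T/K : kT/K).  Hence in tilde V_k[omega_k | Z((k-1)T/K)]
   the linear cost is the realized cost of epoch k plus the proxy cost of later epochs, the
   penalty term k' = k is the realized penalty of epoch k, and the terms k' > k have argument
   Z(kT/K) + tilde Z_k(kT/K : k'T/K).  Summing over k, the realized parts add up to V. *)

theory Submission
  imports Defs
begin

lemma sum_consecutive_blocks:
  fixes f :: "nat \<Rightarrow> 'a::comm_monoid_add"
  shows "(\<Sum>k=1..n. \<Sum>t=(k - 1) * d + 1..k * d. f t) = (\<Sum>t=1..n * d. f t)"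
proof (induction n)
  case 0
  then show ?case by simp
next
  case (Suc n)
  have "(\<Sum>t=1..n * d + d. f t) = (\<Sum>t=1..n * d. f t) + (\<Sum>t=n * d + 1..n * d + d. f t)"
    by (rule sum.ub_add_nat) simp
  with Suc show ?case by (simp add: add.commute)
qed

lemma epoch_of_epoch_periods:
  assumes "t \<in> epoch_periods T K k"
  shows "epoch_of T K t = k"
proof -
  define D where "D = T div K"
  from assms have t: "(k - 1) * D + 1 \<le> t" "t \<le> k * D"
    by (auto simp: epoch_periods_def D_def)
  then obtain k0 where k: "k = Suc k0" by (cases k) auto
  with t have "(t - 1) div D = k0"
    by (intro div_nat_eqI) (auto simp: mult.commute)
  with k show ?thesis by (simp add: epoch_of_def D_def)
qed

lemma Zt_ji_current_epoch:
  "Zt_ji T K omega xt k k k j i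
     = (\<Sum>t\<in>epoch_periods T K k. if omega t = j then policy_x T K xt t i else 0)"
  by (auto simp: Zt_ji_def policy_x_def epoch_of_epoch_periods intro!: sum.cong)

lemma Z_ji_eq_sum_Zt_ji:
  "Z_ji T K omega xt (k * (T div K)) j i = (\<Sum>k'=1..k. Zt_ji T K omega xt k' k' k' j i)"
  unfolding Z_ji_def Zt_ji_current_epoch epoch_periods_def by (rule sum_consecutive_blocks[symmetric])

lemma Z_i_eq_sum_Z_ji:
  assumes "\<And>t. t \<in> {1..t0} \<Longrightarrow> omega t \<in> {1..n}"
  shows "Z_i T K xt t0 i = (\<Sum>j=1..n. Z_ji T K omega xt t0 j i)"
proof -
  have "Z_i T K xt t0 i = (\<Sum>t=1..t0. \<Sum>j=1..n. if omega t = j then policy_x T K xt t i else 0)"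
    using assms by (simp add: Z_i_def)
  then show ?thesis
    unfolding Z_ji_def by (simp only: sum.swap[of _ "{1..n}"])
qed

lemma Z_i_eq_sum_Zt_i:
  assumes "\<And>t. t \<in> {1..k * (T div K)} \<Longrightarrow> omega t \<in> {1..n}"
  shows "Z_i T K xt (k * (T div K)) i = (\<Sum>k'=1..k. Zt_i n T K omega xt k' k' k' i)"
proof -
  have "Z_i T K xt (k * (T div K)) i = (\<Sum>j=1..n. Z_ji T K omega xt (k * (T div K)) j i)"
    by (rule Z_i_eq_sum_Z_ji[OF assms])
  also have "\<dots> = (\<Sum>j=1..n. \<Sum>k'=1..k. Zt_ji T K omega xt k' k' k' j i)"
    by (simp only: Z_ji_eq_sum_Zt_ji)
  finally show ?thesis
    unfolding Zt_i_def by (simp only: sum.swap[of _ "{1..n}"])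
qed

lemma Z_i_epoch_step:
  assumes "1 \<le> k" and "\<And>t. t \<in> {1..k * (T div K)} \<Longrightarrow> omega t \<in> {1..n}"
  shows "Z_i T K xt (k * (T div K)) i
           = Z_i T K xt ((k - 1) * (T div K)) i + Zt_i n T K omega xt k k k i"
proof -
  obtain k0 where k: "k = Suc k0" using assms(1) by (cases k) auto
  have "\<And>t. t \<in> {1..k0 * (T div K)} \<Longrightarrow> omega t \<in> {1..n}"
    using assms(2) k by auto
  from Z_i_eq_sum_Zt_i[where k = k0 and T = T and K = K, OF this]
    Z_i_eq_sum_Zt_i[where k = k and T = T and K = K, OF assms(2)] k
  show ?thesis
    by simp
qed

lemma Zt_ji_split:
  assumes "k1 \<le> k2"
  shows "Zt_ji T K omega xt k k1 k2 j i
           = Zt_ji T K omega xt k k1 k1 j i + Zt_ji T K omega xt k (Suc k1) k2 j i"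
  using assms by (simp add: Zt_ji_def sum.atLeast_Suc_atMost sum.distrib)

lemma Zt_i_split:
  assumes "k1 \<le> k2"
  shows "Zt_i n T K omega xt k k1 k2 i
           = Zt_i n T K omega xt k k1 k1 i + Zt_i n T K omega xt k (Suc k1) k2 i"
  unfolding Zt_i_def Zt_ji_split[OF assms] by (rule sum.distrib)

lemma Zt_i_empty_window: "Zt_i n T K omega xt k (Suc k') k' i = 0"
  by (simp add: Zt_i_def Zt_ji_def)

lemma Z_i_plus_Zt_i_epoch_shift:
  assumes "1 \<le> k" "k \<le> k'" and "\<And>t. t \<in> {1..k * (T div K)} \<Longrightarrow> omega t \<in> {1..n}"
  shows "Z_i T K xt ((k - 1) * (T div K)) i + Zt_i n T K omega xt k k k' i
           = Z_i T K xt (k * (T div K)) i + Zt_i n T K omega xt k (Suc k) k' i"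
  using Z_i_epoch_step[where omega = omega, OF assms(1,3)] Zt_i_split[OF assms(2)] by simp

lemma realized_cost_eq_sum_current_epoch_proxies:
  "(\<Sum>k'=1..k. \<Sum>j=1..n. \<Sum>i=1..m. c j i * Zt_ji T K omega xt k' k' k' j i)
     = (\<Sum>j=1..n. \<Sum>i=1..m. c j i * Z_ji T K omega xt (k * (T div K)) j i)"
proof -
  have "(\<Sum>k'=1..k. \<Sum>j=1..n. \<Sum>i=1..m. c j i * Zt_ji T K omega xt k' k' k' j i)
      = (\<Sum>j=1..n. \<Sum>k'=1..k. \<Sum>i=1..m. c j i * Zt_ji T K omega xt k' k' k' j i)"
    by (rule sum.swap)
  also have "\<dots> = (\<Sum>j=1..n. \<Sum>i=1..m. \<Sum>k'=1..k. c j i * Zt_ji T K omega xt k' k' k' j i)"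
    by (rule sum.cong[OF refl], rule sum.swap)
  finally show ?thesis
    by (simp only: Z_ji_eq_sum_Zt_ji sum_distrib_left)
qed

lemma Vt_k_split_current_epoch:
  assumes k: "k \<in> {1..K}" and "\<And>t. t \<in> {1..k * (T div K)} \<Longrightarrow> omega t \<in> {1..n}"
  shows "Vt_k m n T K c g omega xt k (\<lambda>i. Z_i T K xt ((k - 1) * (T div K)) i)
    = (\<Sum>j=1..n. \<Sum>i=1..m. c j i * Zt_ji T K omega xt k k k j i)
    + (\<Sum>j=1..n. \<Sum>i=1..m. c j i * Zt_ji T K omega xt k (k + 1) K j i)
    + real T / real K * (\<Sum>i=1..m. real k *
        g k i (Z_i T K xt (k * (T div K)) i / real (k * (T div K))))
    + real T / real K * (\<Sum>k'\<in>{k<..K}. \<Sum>i=1..m. real k' *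
        g k' i ((Z_i T K xt (k * (T div K)) i + Zt_i n T K omega xt k (k + 1) k' i)
                / real (k' * (T div K))))"
proof -
  have cost: "(\<Sum>j=1..n. \<Sum>i=1..m. c j i * Zt_ji T K omega xt k k K j i)
      = (\<Sum>j=1..n. \<Sum>i=1..m. c j i * Zt_ji T K omega xt k k k j i)
      + (\<Sum>j=1..n. \<Sum>i=1..m. c j i * Zt_ji T K omega xt k (k + 1) K j i)"
    using k by (simp add: Zt_ji_split[of k K] distrib_left sum.distrib)
  have "{k..K} = insert k {k<..K}" using k by auto
  then have penalty: "(\<Sum>k'=k..K. \<Sum>i=1..m. real k' *
        g k' i ((Z_i T K xt ((k - 1) * (T div K)) i + Zt_i n T K omega xt k k k' i)
                / real (k' * (T div K))))
      = (\<Sum>i=1..m. real k * g k i (Z_i T K xt (k * (T div K)) i / real (k * (T div K))))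
      + (\<Sum>k'\<in>{k<..K}. \<Sum>i=1..m. real k' *
        g k' i ((Z_i T K xt (k * (T div K)) i + Zt_i n T K omega xt k (k + 1) k' i)
                / real (k' * (T div K))))"
    using Z_i_plus_Zt_i_epoch_shift[where omega = omega and n = n, OF _ _ assms(2)] k
    by (simp add: Zt_i_empty_window)
  show ?thesis
    unfolding Vt_k_def cost penalty by (simp add: distrib_left)
qed

theorem proposition3:
  fixes m n T K :: nat and S :: "nat \<Rightarrow> nat set" and c :: "nat \<Rightarrow> nat \<Rightarrow> real"
    and rho :: "nat \<Rightarrow> nat \<Rightarrow> real" and g :: "nat \<Rightarrow> nat \<Rightarrow> real \<Rightarrow> real"
    and Lip :: real and omega :: "nat \<Rightarrow> nat" and eta :: real and mu1 :: "nat \<Rightarrow> nat \<Rightarrow> real"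
    and xt mu a :: "nat \<Rightarrow> nat \<Rightarrow> nat \<Rightarrow> real"
  assumes "0 < K" and "0 < T" and "K dvd T"
    and "\<And>j. j \<in> {1..n} \<Longrightarrow> S j \<subseteq> {1..m}"
    and "\<And>t. t \<in> {1..T} \<Longrightarrow> omega t \<in> {1..n}"
    and "\<And>k i. k \<in> {1..K} \<Longrightarrow> i \<in> {1..m} \<Longrightarrow> rho k i \<in> {0..1}"
    and "\<And>k i. k \<in> {1..K} \<Longrightarrow> i \<in> {1..m} \<Longrightarrow> convex_on {0..1} (g k i)"
    and "\<And>k i x y. k \<in> {1..K} \<Longrightarrow> i \<in> {1..m} \<Longrightarrow> x \<in> {0..1} \<Longrightarrow> y \<in> {0..1}
           \<Longrightarrow> \<bar>g k i x - g k i y\<bar> \<le> Lip * \<bar>x - y\<bar>"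
    and "\<And>k i x. k \<in> {1..K} \<Longrightarrow> i \<in> {1..m} \<Longrightarrow> x \<in> {0..1} \<Longrightarrow> 0 \<le> g k i x"
    and "\<And>k i. k \<in> {1..K} \<Longrightarrow> i \<in> {1..m} \<Longrightarrow> g k i (rho k i) = 0"
    and "dgd_proxy_run m T K S c g omega eta mu1 xt mu a"
  shows "cost_V m n T K c g omega xt =
      (\<Sum>k=1..K. Vt_k m n T K c g omega xt k (\<lambda>i. Z_i T K xt ((k - 1) * (T div K)) i))
    - (\<Sum>k=1..K. \<Sum>j=1..n. \<Sum>i=1..m. c j i * Zt_ji T K omega xt k (k + 1) K j i)
    - (\<Sum>k=1..K. real T / real K * (\<Sum>k'\<in>{k<..K}. \<Sum>i=1..m. real k' *
         g k' i ((Z_i T K xt (k * (T div K)) i + Zt_i n T K omega xt k (k + 1) k' i)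
                 / real (k' * (T div K)))))"
proof -
  have T_eq: "T = K * (T div K)" using \<open>K dvd T\<close> by simp
  have omega_upto: "omega t \<in> {1..n}" if "k \<in> {1..K}" "t \<in> {1..k * (T div K)}" for k t
  proof -
    have "k * (T div K) \<le> T" using that(1) T_eq by (metis atLeastAtMost_iff mult_le_mono1)
    with that(2) show ?thesis by (intro assms(5)) auto
  qed
  have proxies: "(\<Sum>k=1..K. Vt_k m n T K c g omega xt k (\<lambda>i. Z_i T K xt ((k - 1) * (T div K)) i))
    = (\<Sum>k=1..K. \<Sum>j=1..n. \<Sum>i=1..m. c j i * Zt_ji T K omega xt k k k j i)
    + (\<Sum>k=1..K. \<Sum>j=1..n. \<Sum>i=1..m. c j i * Zt_ji T K omega xt k (k + 1) K j i)
    + (\<Sum>k=1..K. real T / real K * (\<Sum>i=1..m. real k *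
        g k i (Z_i T K xt (k * (T div K)) i / real (k * (T div K)))))
    + (\<Sum>k=1..K. real T / real K * (\<Sum>k'\<in>{k<..K}. \<Sum>i=1..m. real k' *
        g k' i ((Z_i T K xt (k * (T div K)) i + Zt_i n T K omega xt k (k + 1) k' i)
                / real (k' * (T div K)))))"
    using sum.cong[OF refl Vt_k_split_current_epoch[OF _ omega_upto]]
    by (simp only: sum.distrib)
  have realized: "(\<Sum>k=1..K. \<Sum>j=1..n. \<Sum>i=1..m. c j i * Zt_ji T K omega xt k k k j i)
      = (\<Sum>j=1..n. \<Sum>i=1..m. c j i * Z_ji T K omega xt T j i)"
    by (subst T_eq) (rule realized_cost_eq_sum_current_epoch_proxies)
  show ?thesis
    unfolding cost_V_def proxies realized by (simp add: sum_distrib_left)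
qed

end
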